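(* Let $L_1$ and $L_2$ be distinct lines in the plane meeting at a point ${\bf a}$. Let $2\theta$ be the measure of the smaller angle between the two lines, and let $\phi$ be the angle between the line through ${\bf a}$ parallel to the $x$-axis and the line bisecting the smaller angle between $L_1$ and $L_2$. Then the subset of $\mathbb{R}^3$ generated by $L_1,L_2$ is the HR-cone $(R_\phi\Lambda_\theta R_{-\phi},{\bf a})$, i.e. the set of $(x,y,z)$ with $z^2=({\bf x}-{\bf a})^TR_\phi\Lambda_\theta R_{-\phi}({\bf x}-{\bf a})$, ${\bf x}=(x,y)^T$.
   Context: For distinct lines $L_1,L_2$ in the plane, the subset of $\mathbb{R}^3$ generated by them is the set of all points $(x,y,\pm z)$ such that $2z$ is the length of a line segment with one endpoint on $L_1$, the other on $L_2$, and midpoint $(x,y)$. For real $\phi$ and $0<\theta<\pi/2$: $R_\phi=\begin{bmatrix}\cos\phi&-\sin\phi\\ \sin\phi&\cos\phi\end{bmatrix}$ and $\Lambda_\theta=\begin{bmatrix}\tan^2\theta&0\\0&\cot^2\theta\end{bmatrix}$. For a symmetric positive definite $2\times2$ matrix $A$ with $\det A=1$ and ${\bf a}\in\mathbb{R}^2$, the HR-cone $(A,{\bf a})$ is $\{(x,y,z): z^2=({\bf x}-{\bf a})^TA({\bf x}-{\bf a})\}$. *)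

theory Defs
  imports "HOL-Analysis.Analysis"
begin

definition line_through :: "real^2 \<Rightarrow> real \<Rightarrow> (real^2) set" where
  "line_through a \<alpha> = {a + t *\<^sub>R vector [cos \<alpha>, sin \<alpha>] | t. True}"

definition generated_set :: "(real^2) set \<Rightarrow> (real^2) set \<Rightarrow> (real \<times> real \<times> real) set" where
  "generated_set L1 L2 =
     {(x, y, z). \<exists>p\<in>L1. \<exists>q\<in>L2. vector [x, y] = midpoint p q \<and> 2 * \<bar>z\<bar> = dist p q}"

definition rot :: "real \<Rightarrow> real^2^2" where
  "rot \<phi> = vector [vector [cos \<phi>, - sin \<phi>], vector [sin \<phi>, cos \<phi>]]"

definition Lam :: "real \<Rightarrow> real^2^2" where
  "Lam \<theta> = vector [vector [(tan \<theta>)\<^sup>2, 0], vector [0, (cot \<theta>)\<^sup>2]]"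

definition hr_cone :: "real^2^2 \<Rightarrow> real^2 \<Rightarrow> (real \<times> real \<times> real) set" where
  "hr_cone A a = {(x, y, z). z\<^sup>2 = (vector [x, y] - a) \<bullet> (A *v (vector [x, y] - a))}"

end

theory Submission
  imports Defs
begin

(* Work in the orthonormal frame e = dir phi, e' = dir (phi + pi/2) along the bisector.
   For p = a + s dir (phi + theta) and q = a + t dir (phi - theta) on the two lines,
     midpoint p q - a = ((s + t) cos theta / 2) e + ((s - t) sin theta / 2) e',
     p - q = ((s - t) cos theta) e + ((s + t) sin theta) e'.
   As cos theta and sin theta are nonzero, every midpoint (x, y) in frame coordinates comes from
   exactly one chord, and its half-length squared is tan^2 theta x^2 + cot^2 theta y^2, which is
   the quadratic form of R_phi Lam_theta R_(-phi) in the same coordinates. *)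

definition dir :: "real \<Rightarrow> real^2" where
  "dir \<alpha> = vector [cos \<alpha>, sin \<alpha>]"

lemma inner_dir: "dir \<alpha> \<bullet> dir \<beta> = cos (\<alpha> - \<beta>)"
  by (simp add: dir_def inner_vec_def sum_2 cos_diff)

lemma dir_perp: "dir (\<phi> + pi / 2) = vector [- sin \<phi>, cos \<phi>]"
  by (simp add: dir_def cos_add sin_add)

lemma dir_add: "dir (\<phi> + \<theta>) = cos \<theta> *\<^sub>R dir \<phi> + sin \<theta> *\<^sub>R dir (\<phi> + pi / 2)"
  by (simp add: dir_def vec_eq_iff forall_2 cos_add sin_add algebra_simps)

lemma dir_diff: "dir (\<phi> - \<theta>) = cos \<theta> *\<^sub>R dir \<phi> - sin \<theta> *\<^sub>R dir (\<phi> + pi / 2)"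
  using dir_add[of \<phi> "- \<theta>"] by simp

lemma inner_frame:
  fixes x y :: real
  shows "(x *\<^sub>R dir \<phi> + y *\<^sub>R dir (\<phi> + pi / 2)) \<bullet> dir \<phi> = x"
    and "(x *\<^sub>R dir \<phi> + y *\<^sub>R dir (\<phi> + pi / 2)) \<bullet> dir (\<phi> + pi / 2) = y"
  by (simp_all add: inner_add_left inner_dir)

lemma frame_decomposition:
  "v = (v \<bullet> dir \<phi>) *\<^sub>R dir \<phi> + (v \<bullet> dir (\<phi> + pi / 2)) *\<^sub>R dir (\<phi> + pi / 2)"
  unfolding dir_perp
  by (simp add: dir_def vec_eq_iff forall_2 inner_vec_def sum_2 algebra_simps)
     (simp add: mult.assoc[symmetric] flip: distrib_right)

lemma norm_frame: "(norm (x *\<^sub>R dir \<phi> + y *\<^sub>R dir (\<phi> + pi / 2)))\<^sup>2 = x\<^sup>2 + y\<^sup>2"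
  unfolding power2_norm_eq_inner by (simp add: inner_add_left inner_add_right inner_dir inner_commute power2_eq_square)

lemma inner_rot: "v \<bullet> (rot \<phi> *v u) = (rot (- \<phi>) *v v) \<bullet> u"
  by (simp add: rot_def inner_vec_def matrix_vector_mult_def sum_2 algebra_simps)

lemma rot_minus_frame:
  "rot (- \<phi>) *v (x *\<^sub>R dir \<phi> + y *\<^sub>R dir (\<phi> + pi / 2)) = vector [x, y]"
  unfolding dir_perp
  by (simp add: rot_def dir_def vec_eq_iff forall_2 matrix_vector_mult_def sum_2 algebra_simps)
     (simp add: mult.assoc flip: distrib_left)

lemma quadratic_form_frame:
  "(x *\<^sub>R dir \<phi> + y *\<^sub>R dir (\<phi> + pi / 2)) \<bullet> ((rot \<phi> ** Lam \<theta> ** rot (- \<phi>)) *v (x *\<^sub>R dir \<phi> + y *\<^sub>R dir (\<phi> + pi / 2)))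
   = (tan \<theta>)\<^sup>2 * x\<^sup>2 + (cot \<theta>)\<^sup>2 * y\<^sup>2"
  by (simp add: matrix_vector_mul_assoc[symmetric] inner_rot rot_minus_frame)
     (simp add: Lam_def inner_vec_def matrix_vector_mult_def sum_2 power2_eq_square)

lemma frame_eq_iff:
  "x *\<^sub>R dir \<phi> + y *\<^sub>R dir (\<phi> + pi / 2) = x' *\<^sub>R dir \<phi> + y' *\<^sub>R dir (\<phi> + pi / 2)
   \<longleftrightarrow> x = x' \<and> y = y'"
  by (metis inner_frame)

lemma mem_line_through: "p \<in> line_through a \<alpha> \<longleftrightarrow> (\<exists>s. p = a + s *\<^sub>R dir \<alpha>)"
  by (simp add: line_through_def dir_def)

lemma midpoint_on_lines:
  "midpoint (a + s *\<^sub>R dir (\<phi> + \<theta>)) (a + t *\<^sub>R dir (\<phi> - \<theta>))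
   = a + (((s + t) * cos \<theta> / 2) *\<^sub>R dir \<phi> + ((s - t) * sin \<theta> / 2) *\<^sub>R dir (\<phi> + pi / 2))"
  unfolding dir_add[of \<phi> \<theta>] dir_diff[of \<phi> \<theta>] midpoint_def
  by (simp add: vec_eq_iff field_simps)

lemma dist_on_lines:
  "(dist (s *\<^sub>R dir (\<phi> + \<theta>)) (t *\<^sub>R dir (\<phi> - \<theta>)))\<^sup>2
   = ((s - t) * cos \<theta>)\<^sup>2 + ((s + t) * sin \<theta>)\<^sup>2"
proof -
  have "s *\<^sub>R dir (\<phi> + \<theta>) - t *\<^sub>R dir (\<phi> - \<theta>)
      = ((s - t) * cos \<theta>) *\<^sub>R dir \<phi> + ((s + t) * sin \<theta>) *\<^sub>R dir (\<phi> + pi / 2)"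
    unfolding dir_add[of \<phi> \<theta>] dir_diff[of \<phi> \<theta>] by (simp add: vec_eq_iff algebra_simps)
  then show ?thesis
    by (simp add: dist_norm norm_frame)
qed

lemma chord_parameters_iff:
  fixes c S x y z :: real
  assumes "c \<noteq> 0" and "S \<noteq> 0"
  shows "(\<exists>s t. x = (s + t) * c / 2 \<and> y = (s - t) * S / 2 \<and> 4 * z\<^sup>2 = ((s - t) * c)\<^sup>2 + ((s + t) * S)\<^sup>2)
    \<longleftrightarrow> z\<^sup>2 = (S / c)\<^sup>2 * x\<^sup>2 + (c / S)\<^sup>2 * y\<^sup>2"
proof
  assume "\<exists>s t. x = (s + t) * c / 2 \<and> y = (s - t) * S / 2 \<and> 4 * z\<^sup>2 = ((s - t) * c)\<^sup>2 + ((s + t) * S)\<^sup>2"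
  then obtain s t where "x = (s + t) * c / 2" "y = (s - t) * S / 2"
      and z: "4 * z\<^sup>2 = ((s - t) * c)\<^sup>2 + ((s + t) * S)\<^sup>2"
    by blast
  then have "s + t = 2 * x / c" "s - t = 2 * y / S"
    using assms by (simp_all add: eq_divide_eq)
  moreover from z have "z\<^sup>2 = ((s - t) * c / 2)\<^sup>2 + ((s + t) * S / 2)\<^sup>2"
    by (simp add: power_divide)
  ultimately show "z\<^sup>2 = (S / c)\<^sup>2 * x\<^sup>2 + (c / S)\<^sup>2 * y\<^sup>2"
    by (simp add: power_mult_distrib power_divide mult.commute)
next
  assume z: "z\<^sup>2 = (S / c)\<^sup>2 * x\<^sup>2 + (c / S)\<^sup>2 * y\<^sup>2"
  define s where "s = x / c + y / S"
  define t where "t = x / c - y / S"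
  have st: "s + t = 2 * x / c" "s - t = 2 * y / S"
    by (simp_all add: s_def t_def)
  then have "x = (s + t) * c / 2" "y = (s - t) * S / 2"
    using assms by simp_all
  moreover have "4 * z\<^sup>2 = ((s - t) * c)\<^sup>2 + ((s + t) * S)\<^sup>2"
    unfolding st z by (simp add: power_mult_distrib power_divide algebra_simps)
  ultimately show "\<exists>s t. x = (s + t) * c / 2 \<and> y = (s - t) * S / 2 \<and> 4 * z\<^sup>2 = ((s - t) * c)\<^sup>2 + ((s + t) * S)\<^sup>2"
    by blast
qed

lemma twice_abs_eq_iff:
  fixes z d :: real
  assumes "0 \<le> d"
  shows "2 * \<bar>z\<bar> = d \<longleftrightarrow> 4 * z\<^sup>2 = d\<^sup>2"
proof -
  have "(2 * \<bar>z\<bar>)\<^sup>2 = 4 * z\<^sup>2"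
    by (simp add: power_mult_distrib)
  then show ?thesis
    using assms power2_eq_iff_nonneg[of "2 * \<bar>z\<bar>" d] by simp
qed

lemma generated_set_lines_eq_hr_cone:
  fixes a :: "real^2"
  assumes "sin \<theta> \<noteq> 0" and "cos \<theta> \<noteq> 0"
  shows "generated_set (line_through a (\<phi> + \<theta>)) (line_through a (\<phi> - \<theta>))
    = hr_cone (rot \<phi> ** Lam \<theta> ** rot (- \<phi>)) a"
proof (intro set_eqI)
  fix X :: "real \<times> real \<times> real"
  obtain u v z where X: "X = (u, v, z)"
    by (cases X)
  define x where "x = (vector [u, v] - a) \<bullet> dir \<phi>"
  define y where "y = (vector [u, v] - a) \<bullet> dir (\<phi> + pi / 2)"
  have m: "vector [u, v] = a + (x *\<^sub>R dir \<phi> + y *\<^sub>R dir (\<phi> + pi / 2))"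
    using frame_decomposition[of "vector [u, v] - a" \<phi>] by (simp add: x_def y_def algebra_simps)
  have "X \<in> generated_set (line_through a (\<phi> + \<theta>)) (line_through a (\<phi> - \<theta>)) \<longleftrightarrow>
      (\<exists>s t. vector [u, v] = midpoint (a + s *\<^sub>R dir (\<phi> + \<theta>)) (a + t *\<^sub>R dir (\<phi> - \<theta>))
        \<and> 2 * \<bar>z\<bar> = dist (a + s *\<^sub>R dir (\<phi> + \<theta>)) (a + t *\<^sub>R dir (\<phi> - \<theta>)))"
    unfolding X generated_set_def mem_Collect_eq prod.case Bex_def mem_line_through by blast
  also have "\<dots> \<longleftrightarrow> (\<exists>s t. x = (s + t) * cos \<theta> / 2 \<and> y = (s - t) * sin \<theta> / 2
        \<and> 4 * z\<^sup>2 = ((s - t) * cos \<theta>)\<^sup>2 + ((s + t) * sin \<theta>)\<^sup>2)"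
    by (simp add: m midpoint_on_lines frame_eq_iff twice_abs_eq_iff dist_on_lines)
  also have "\<dots> \<longleftrightarrow> z\<^sup>2 = (tan \<theta>)\<^sup>2 * x\<^sup>2 + (cot \<theta>)\<^sup>2 * y\<^sup>2"
    using chord_parameters_iff[OF assms(2,1)] by (simp add: tan_def cot_def)
  also have "\<dots> \<longleftrightarrow> X \<in> hr_cone (rot \<phi> ** Lam \<theta> ** rot (- \<phi>)) a"
    by (simp add: X hr_cone_def m quadratic_form_frame)
  finally show "X \<in> generated_set (line_through a (\<phi> + \<theta>)) (line_through a (\<phi> - \<theta>)) \<longleftrightarrow>
      X \<in> hr_cone (rot \<phi> ** Lam \<theta> ** rot (- \<phi>)) a" .
qed

lemma generated_set_commute: "generated_set L1 L2 = generated_set L2 L1"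
  unfolding generated_set_def by (auto; metis midpoint_sym dist_commute)

theorem theorem3p3:
  fixes L1 L2 :: "(real^2) set" and a :: "real^2" and \<theta> \<phi> :: real
  assumes "0 < \<theta>" and "2 * \<theta> \<le> pi / 2"
    and "{L1, L2} = {line_through a (\<phi> + \<theta>), line_through a (\<phi> - \<theta>)}"
  shows "generated_set L1 L2 = hr_cone (rot \<phi> ** Lam \<theta> ** rot (- \<phi>)) a"
proof -
  have "sin \<theta> \<noteq> 0" "cos \<theta> \<noteq> 0"
    using assms(1,2) sin_gt_zero[of \<theta>] cos_gt_zero[of \<theta>] by auto
  then have "generated_set (line_through a (\<phi> + \<theta>)) (line_through a (\<phi> - \<theta>))
      = hr_cone (rot \<phi> ** Lam \<theta> ** rot (- \<phi>)) a"
    by (rule generated_set_lines_eq_hr_cone)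
  with assms(3) show ?thesis
    by (metis doubleton_eq_iff generated_set_commute)
qed

end
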